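(* Let $X\in\mathbb{R}^{n\times d}$, $\Theta\in\mathbb{R}^{d\times C}$, $\widetilde A\in\mathbb{R}^{n\times n}$, $L\ge1$, a node $u$, and a matrix $\widetilde E\in\mathbb{R}^{n\times n}$ with $\Delta_u:=\widetilde A^L_u-\widetilde E_u\neq 0$. Let $\mathcal{K}$ be a finite nonempty index set of perturbations, and let $\Sigma_k\in\mathbb{R}^{n\times d}$, $k\in\mathcal{K}$, be random matrices whose $|\mathcal{K}|nd$ entries are i.i.d. $\mathcal{N}(0,\sigma^2)$ with $\sigma>0$; set $\Sigma_0:=0$. With $\Psi_u(M,Y)=\mathrm{softmax}(M_uY\Theta)$, define $$S_\Psi := \frac{1}{|\mathcal{K}|+1}\sum_{k\in\mathcal{K}\cup\{0\}}\big\lVert\Psi_u(\widetilde A^L,X+\Sigma_k)-\Psi_u(\widetilde E,X+\Sigma_k)\big\rVert_2.$$ Then for every $\xi$, $$\mathbb{P}\big(S_\Psi\le\xi\big)\;\ge\;F_{\chi^2_{|\mathcal{K}|nd}}\!\left(\frac{\xi-\gamma_1\lVert\Delta_u\rVert_2}{\gamma_2\lVert\Delta_u\rVert_2\,\sigma}-|\mathcal{K}|\right),$$ where $\gamma_1=\lVert\Theta^\intercal\rVert_2\lVert X^\intercal\rVert_2$, $\gamma_2=\lVert\Theta^\intercal\rVert_2/(|\mathcal{K}|+1)$, and $F_{\chi^2_{m}}$ is the cumulative distribution function of a chi-square random variable with $m$ degrees of freedom.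
   Context: $\widetilde A = (D+I_n)^{-1/2}(A+I_n)(D+I_n)^{-1/2}$ is the normalized adjacency matrix with self-loops of a graph with adjacency matrix $A$ and diagonal degree matrix $D$; $\widetilde A^L$ is its $L$-th power and $M_u$ the $u$-th row of a matrix $M$. $\widetilde E$ is the powered propagation matrix after applying an explanation $\mathcal{E}_u$ for node $u$. For matrices, $\lVert\cdot\rVert_2$ denotes the spectral norm; for vectors, the Euclidean norm. *)

theory Defs
  imports "HOL-Analysis.Analysis" "HOL-Probability.Probability"
begin

definition spec_norm :: "real^'n^'m \<Rightarrow> real" where
  "spec_norm A = onorm (\<lambda>x. A *v x)"

definition matpow :: "real^'n^'n \<Rightarrow> nat \<Rightarrow> real^'n^'n" where
  "matpow A L = ((\<lambda>B. A ** B) ^^ L) (mat 1)"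

definition softmax :: "real^'c \<Rightarrow> real^'c" where
  "softmax v = (\<chi> j. exp (v $ j) / (\<Sum>i\<in>UNIV. exp (v $ i)))"

definition Psi :: "real^'c^'d \<Rightarrow> 'n \<Rightarrow> real^'n^'n \<Rightarrow> real^'d^'n \<Rightarrow> real^'c" where
  "Psi \<Theta> u M Y = softmax (((M $ u) v* Y) v* \<Theta>)"

definition chi_square_density :: "nat \<Rightarrow> real \<Rightarrow> real" where
  "chi_square_density m x =
     (if x > 0 then x powr (real m / 2 - 1) * exp (- x / 2) / (2 powr (real m / 2) * Gamma (real m / 2))
      else 0)"

definition chi_square_cdf :: "nat \<Rightarrow> real \<Rightarrow> real" where
  "chi_square_cdf m x = cdf (density lborel (\<lambda>t. ennreal (chi_square_density m t))) x"

end

theory Submission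
  imports Defs
begin

text \<open>
  Softmax is 1-Lipschitz, so each summand of \<open>S\<^sub>\<Psi>\<close> is at most
  \<open>\<Vert>\<Theta>\<^sup>T\<Vert>\<^sub>2 \<Vert>\<Delta>\<^sub>u\<Vert> (\<Vert>X\<^sup>T\<Vert>\<^sub>2 + \<Vert>\<Sigma>\<^sub>k\<Vert>\<^sub>F)\<close>.
  Bounding \<open>\<Vert>\<Sigma>\<^sub>k\<Vert>\<^sub>F \<le> \<sigma> + \<Vert>\<Sigma>\<^sub>k\<Vert>\<^sub>F\<^sup>2/\<sigma>\<close> makes \<open>S\<^sub>\<Psi>\<close> at most an affine function
  \<open>\<gamma>\<^sub>1\<Vert>\<Delta>\<^sub>u\<Vert> + \<gamma>\<^sub>2\<Vert>\<Delta>\<^sub>u\<Vert>\<sigma>(|\<K>| + Q)\<close> of \<open>Q = \<Sum> (\<Sigma>\<^sub>k)\<^sub>i\<^sub>j\<^sup>2/\<sigma>\<^sup>2\<close>,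
  a sum of \<open>|\<K>|nd\<close> squares of independent standard normals. Hence \<open>{Q \<le> t} \<subseteq> {S\<^sub>\<Psi> \<le> \<xi>}\<close>
  for the threshold \<open>t\<close> of the statement, and \<open>Q\<close> is chi-square distributed: a squared standard
  normal has the Gamma(1/2) law with scale 2, and these laws are closed under independent sums.
\<close>

definition gamma2_density :: "real \<Rightarrow> real \<Rightarrow> real" where
  "gamma2_density a x = (if x > 0 then x powr (a - 1) * exp (- x / 2) / (2 powr a * Gamma a) else 0)"

lemma gamma2_density_nonneg: "a > 0 \<Longrightarrow> gamma2_density a x \<ge> 0"
  using Gamma_real_pos[of a] by (auto simp: gamma2_density_def)

lemma borel_measurable_gamma2_density[measurable]: "gamma2_density a \<in> borel_measurable borel"
  unfolding gamma2_density_def by measurable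

lemma chi_square_density_eq_gamma2: "chi_square_density m = gamma2_density (real m / 2)"
  by (simp add: fun_eq_iff chi_square_density_def gamma2_density_def)

lemma gamma2_density_product_rescaled:
  assumes a: "a > 0" and b: "b > 0" and x: "x > 0"
  shows "x * (gamma2_density a (x - x * t) * gamma2_density b (x * t)) =
         Gamma (a + b) / (Gamma a * Gamma b) * gamma2_density (a + b) x *
         (t powr (b - 1) * (1 - t) powr (a - 1) * indicator {0..1} t)"
proof (cases "0 < t \<and> t < 1")
  case False
  then consider "t < 0" | "t = 0" | "t = 1" | "t > 1" by linarith
  then show ?thesis
    using x by cases (auto simp: gamma2_density_def indicator_def zero_less_mult_iff)
next
  case t: True
  have "Gamma a > 0" "Gamma b > 0" "Gamma (a + b) > 0"
    using Gamma_real_pos a b by auto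
  moreover have "(x - x * t) powr (a - 1) = x powr (a - 1) * (1 - t) powr (a - 1)"
    using x t by (simp add: powr_mult[symmetric] algebra_simps)
  moreover have "x * (x powr (a - 1) * x powr (b - 1)) = x powr (a + b - 1)"
    using x by (simp add: powr_add[symmetric] powr_mult_base)
  moreover have "exp (- (x - x * t) / 2) * exp (- (x * t) / 2) = exp (- x / 2)"
    by (simp add: exp_add[symmetric] field_simps)
  moreover have "(2::real) powr (a + b) = 2 powr a * 2 powr b" by (simp add: powr_add)
  ultimately show ?thesis
    using x t by (simp add: gamma2_density_def powr_mult divide_simps) (simp add: algebra_simps)
qed

lemma gamma2_density_convolution:
  assumes a: "a > 0" and b: "b > 0"
  shows "(\<integral>\<^sup>+y. ennreal (gamma2_density a (x - y)) * ennreal (gamma2_density b y) \<partial>lborel)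
       = ennreal (gamma2_density (a + b) x)"
proof (cases "x > 0")
  case False
  then have "(\<lambda>y. ennreal (gamma2_density a (x - y)) * ennreal (gamma2_density b y)) = (\<lambda>_. 0)"
    by (auto simp: gamma2_density_def)
  with False show ?thesis
    by (simp add: gamma2_density_def)
next
  case x: True
  have "Gamma a > 0" "Gamma b > 0" "Gamma (a + b) > 0"
    using Gamma_real_pos a b by auto
  then have Beta_normalizes: "Gamma (a + b) / (Gamma a * Gamma b) * Beta b a = 1"
    by (simp add: Beta_def add.commute)
  define C where "C = Gamma (a + b) / (Gamma a * Gamma b) * gamma2_density (a + b) x"
  have "C \<ge> 0"
    using \<open>Gamma a > 0\<close> \<open>Gamma b > 0\<close> \<open>Gamma (a + b) > 0\<close> gamma2_density_nonneg[of "a + b" x] a b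
    by (simp add: C_def)
  have "(\<integral>\<^sup>+y. ennreal (gamma2_density a (x - y)) * ennreal (gamma2_density b y) \<partial>lborel)
      = ennreal x * (\<integral>\<^sup>+t. ennreal (gamma2_density a (x - (0 + x * t)) * gamma2_density b (0 + x * t)) \<partial>lborel)"
    using x gamma2_density_nonneg a b
    by (subst nn_integral_real_affine[where c=x and t=0]) (auto simp: ennreal_mult)
  also have "\<dots> = (\<integral>\<^sup>+t. ennreal (x * (gamma2_density a (x - x * t) * gamma2_density b (x * t))) \<partial>lborel)"
    using x gamma2_density_nonneg a b by (subst nn_integral_cmult[symmetric]) (auto simp: ennreal_mult)
  also have "\<dots> = (\<integral>\<^sup>+t. ennreal C * ennreal (t powr (b - 1) * (1 - t) powr (a - 1) * indicator {0..1} t) \<partial>lborel)"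
    unfolding gamma2_density_product_rescaled[OF a b x] C_def[symmetric]
    using \<open>C \<ge> 0\<close> by (simp add: ennreal_mult')
  also have "\<dots> = ennreal C * ennreal (Beta b a)"
    using nn_integral_has_integral_lebesgue[OF _ has_integral_Beta_real[OF b a]]
    by (subst nn_integral_cmult) (auto simp: mult_ac)
  also have "\<dots> = ennreal (C * Beta b a)"
    using \<open>C \<ge> 0\<close> by (simp add: ennreal_mult')
  also have "C * Beta b a = Gamma (a + b) / (Gamma a * Gamma b) * Beta b a * gamma2_density (a + b) x"
    by (simp add: C_def)
  also have "\<dots> = gamma2_density (a + b) x"
    by (simp only: Beta_normalizes mult_1)
  finally show ?thesis .
qed

lemma (in prob_space) gamma2_distributed_sum:
  assumes "finite I" "I \<noteq> {}"
    and "\<And>i. i \<in> I \<Longrightarrow> a i > 0"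
    and "\<And>i. i \<in> I \<Longrightarrow> distributed M lborel (X i) (\<lambda>x. ennreal (gamma2_density (a i) x))"
    and "indep_vars (\<lambda>i. borel) X I"
  shows "distributed M lborel (\<lambda>\<omega>. \<Sum>i\<in>I. X i \<omega>) (\<lambda>x. ennreal (gamma2_density (\<Sum>i\<in>I. a i) x))"
  using assms
proof (induct rule: finite_ne_induct)
  case (singleton i)
  then show ?case by auto
next
  case (insert i I)
  have "(\<Sum>i\<in>I. a i) > 0"
    using insert by (intro sum_pos) auto
  have IH: "distributed M lborel (\<lambda>\<omega>. \<Sum>i\<in>I. X i \<omega>) (\<lambda>x. ennreal (gamma2_density (\<Sum>i\<in>I. a i) x))"
    using insert by (auto intro!: insert.hyps(4) intro: indep_vars_subset)
  have "indep_var borel (X i) borel (\<lambda>\<omega>. \<Sum>i\<in>I. X i \<omega>)"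
    using insert by (intro indep_vars_sum) auto
  from distributed_convolution[OF this insert.prems(2)[of i] IH]
  show ?case
    using insert \<open>(\<Sum>i\<in>I. a i) > 0\<close> by (simp add: gamma2_density_convolution)
qed

lemma nn_integral_std_normal_density_symmetric_interval:
  assumes "r \<ge> 0"
  shows "(\<integral>\<^sup>+x. ennreal (std_normal_density x) * indicator {-r..r} x \<partial>lborel)
       = (\<integral>\<^sup>+x. ennreal (gamma2_density (1/2) x * indicator {..r\<^sup>2} x) \<partial>lborel)"
proof -
  let ?half = "\<lambda>x. ennreal (std_normal_density x * indicator {0..r} x)"
  have "(\<integral>\<^sup>+x. ennreal (std_normal_density x) * indicator {-r..r} x \<partial>lborel)
      = (\<integral>\<^sup>+x. ennreal (std_normal_density x * indicator {-r..0} x) + ?half x \<partial>lborel)"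
    by (intro nn_integral_cong_AE AE_I[where N="{0}"])
       (auto simp: indicator_def emeasure_lborel_countable)
  also have "\<dots> = (\<integral>\<^sup>+x. ennreal (std_normal_density x * indicator {-r..0} x) \<partial>lborel) + (\<integral>\<^sup>+x. ?half x \<partial>lborel)"
    by (rule nn_integral_add) auto
  also have "(\<integral>\<^sup>+x. ennreal (std_normal_density x * indicator {-r..0} x) \<partial>lborel) = (\<integral>\<^sup>+x. ?half x \<partial>lborel)"
    by (subst nn_integral_real_affine[where c="-1" and t=0])
       (auto simp: indicator_def normal_density_def intro!: nn_integral_cong)
  also have "(\<integral>\<^sup>+x. ?half x \<partial>lborel) + (\<integral>\<^sup>+x. ?half x \<partial>lborel) = (\<integral>\<^sup>+x. ?half x + ?half x \<partial>lborel)"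
    by (rule nn_integral_add[symmetric]) auto
  also have "\<dots> = (\<integral>\<^sup>+x. ennreal (gamma2_density (1/2) (x\<^sup>2) * (2 * x) * indicator {0..r} x) \<partial>lborel)"
  proof -
    have "?half x + ?half x = ennreal (gamma2_density (1/2) (x\<^sup>2) * (2 * x) * indicator {0..r} x)"
      if "x \<noteq> 0" for x
    proof -
      have "gamma2_density (1/2) (x\<^sup>2) * (2 * x) = 2 * std_normal_density x" if "x > 0"
        using that by (simp add: gamma2_density_def normal_density_def powr_minus powr_half_sqrt
            Gamma_one_half_real real_sqrt_mult field_simps)
      then show ?thesis
        using \<open>x \<noteq> 0\<close> by (auto simp: indicator_def ennreal_plus[symmetric] mult_ac simp del: ennreal_plus)
    qed
    then show ?thesis
      by (intro nn_integral_cong_AE AE_I[where N="{0}"]) auto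
  qed
  also have "\<dots> = (\<integral>\<^sup>+x. ennreal (gamma2_density (1/2) x * indicator {0\<^sup>2..r\<^sup>2} x) \<partial>lborel)"
    by (subst nn_integral_substitution[where g = "\<lambda>x. x ^ 2" and g' = "\<lambda>x. 2 * x", symmetric])
       (auto intro!: derivative_eq_intros continuous_intros simp: set_borel_measurable_def assms)
  also have "\<dots> = (\<integral>\<^sup>+x. ennreal (gamma2_density (1/2) x * indicator {..r\<^sup>2} x) \<partial>lborel)"
    by (intro nn_integral_cong) (auto simp: indicator_def gamma2_density_def)
  finally show ?thesis .
qed

lemma (in prob_space) std_normal_square_distributed:
  assumes Y: "distributed M lborel Y (\<lambda>x. ennreal (std_normal_density x))"
  shows "distributed M lborel (\<lambda>\<omega>. (Y \<omega>)\<^sup>2) (\<lambda>x. ennreal (gamma2_density (1/2) x))"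
proof (rule distributedI_borel_atMost[where g="\<lambda>c. measure M {\<omega>\<in>space M. (Y \<omega>)\<^sup>2 \<le> c}"])
  have [measurable]: "Y \<in> borel_measurable M"
    using distributed_measurable[OF Y] by simp
  show "(\<lambda>\<omega>. (Y \<omega>)\<^sup>2) \<in> borel_measurable M" by measurable
  show "AE x in lborel. 0 \<le> gamma2_density (1/2) x" by (simp add: gamma2_density_nonneg)
  fix c :: real
  show "emeasure M {\<omega> \<in> space M. (Y \<omega>)\<^sup>2 \<le> c} = ennreal (measure M {\<omega> \<in> space M. (Y \<omega>)\<^sup>2 \<le> c})"
    by (simp add: emeasure_eq_measure)
  show "(\<integral>\<^sup>+x. ennreal (gamma2_density (1/2) x * indicator {..c} x) \<partial>lborel)
      = ennreal (measure M {\<omega> \<in> space M. (Y \<omega>)\<^sup>2 \<le> c})"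
  proof (cases "c < 0")
    case True
    then have "{\<omega> \<in> space M. (Y \<omega>)\<^sup>2 \<le> c} = {}"
      by (auto simp: not_le intro: less_le_trans)
    moreover have "(\<lambda>x. ennreal (gamma2_density (1/2) x * indicator {..c} x)) = (\<lambda>_. 0)"
      using True by (auto simp: gamma2_density_def indicator_def)
    ultimately show ?thesis by (simp only:) simp
  next
    case False
    define r where "r = sqrt c"
    have r: "r \<ge> 0" "r\<^sup>2 = c" using False by (auto simp: r_def)
    have "{\<omega> \<in> space M. (Y \<omega>)\<^sup>2 \<le> c} = Y -` {-r..r} \<inter> space M"
      using r by (auto simp: power2_le_iff_abs_le abs_le_iff simp flip: r(2))
    then have "ennreal (measure M {\<omega> \<in> space M. (Y \<omega>)\<^sup>2 \<le> c}) = emeasure M (Y -` {-r..r} \<inter> space M)"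
      by (simp add: emeasure_eq_measure)
    also have "\<dots> = (\<integral>\<^sup>+x. ennreal (std_normal_density x) * indicator {-r..r} x \<partial>lborel)"
      by (rule distributed_emeasure[OF Y]) simp
    finally show ?thesis
      using nn_integral_std_normal_density_symmetric_interval[OF r(1)] r(2) by simp
  qed
qed simp

lemma (in prob_space) sum_normal_squares_distributed:
  assumes "finite I" "I \<noteq> {}" "\<sigma> > 0"
    and "indep_vars (\<lambda>_. borel) Z I"
    and "\<And>i. i \<in> I \<Longrightarrow> distributed M lborel (Z i) (\<lambda>x. ennreal (normal_density 0 \<sigma> x))"
  shows "distributed M lborel (\<lambda>\<omega>. \<Sum>i\<in>I. (Z i \<omega> / \<sigma>)\<^sup>2) (\<lambda>x. ennreal (chi_square_density (card I) x))"
proof -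
  have "distributed M lborel (\<lambda>\<omega>. (Z i \<omega> / \<sigma>)\<^sup>2) (\<lambda>x. ennreal (gamma2_density (1/2) x))" if "i \<in> I" for i
    using std_normal_square_distributed normal_standard_normal_convert[OF \<open>\<sigma> > 0\<close>] assms(5)[OF that]
    by simp
  moreover have "indep_vars (\<lambda>_. borel) (\<lambda>i \<omega>. (Z i \<omega> / \<sigma>)\<^sup>2) I"
    by (rule indep_vars_compose2[OF assms(4)]) auto
  ultimately show ?thesis
    using gamma2_distributed_sum[OF assms(1,2), of "\<lambda>_. 1/2"] by (simp add: chi_square_density_eq_gamma2)
qed

lemma (in prob_space) measure_le_eq_chi_square_cdf:
  assumes Q: "distributed M lborel Q (\<lambda>x. ennreal (chi_square_density m x))"
  shows "measure M {\<omega> \<in> space M. Q \<omega> \<le> t} = chi_square_cdf m t"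
proof -
  have [measurable]: "Q \<in> borel_measurable M"
    using distributed_measurable[OF Q] by simp
  have "measure M {\<omega> \<in> space M. Q \<omega> \<le> t} = measure (distr M lborel Q) {..t}"
    by (subst measure_distr) (auto intro!: arg_cong[where f="measure M"])
  then show ?thesis
    by (simp add: distributed_distr_eq_density[OF Q] chi_square_cdf_def cdf_def)
qed

lemma chi_square_cdf_nonpos: "x \<le> 0 \<Longrightarrow> chi_square_cdf m x = 0"
proof -
  assume "x \<le> 0"
  then have "(\<lambda>t. ennreal (chi_square_density m t) * indicator {..x} t) = (\<lambda>_. 0)"
    by (auto simp: chi_square_density_def indicator_def)
  then have "emeasure (density lborel (\<lambda>t. ennreal (chi_square_density m t))) {..x} = 0"
    by (subst emeasure_density) (auto simp: chi_square_density_eq_gamma2)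
  then show ?thesis
    by (simp add: chi_square_cdf_def cdf_def measure_def)
qed

lemma norm_vec_power2: "(norm x)\<^sup>2 = (\<Sum>j\<in>UNIV. (norm (x $ j))\<^sup>2)"
  by (simp add: norm_vec_def L2_set_def sum_nonneg)

lemma norm_real_vec_power2: "(norm (x :: real^'n))\<^sup>2 = (\<Sum>j\<in>UNIV. (x $ j)\<^sup>2)"
  by (simp add: norm_vec_power2)

lemma sum_power2_weighted_centered_le:
  fixes p h :: "'a \<Rightarrow> real"
  assumes "finite A" and p_nonneg: "\<And>j. j \<in> A \<Longrightarrow> p j \<ge> 0" and p_sum: "sum p A = 1"
  shows "(\<Sum>j\<in>A. (p j * (h j - (\<Sum>i\<in>A. p i * h i)))\<^sup>2) \<le> (\<Sum>j\<in>A. (h j)\<^sup>2)"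
proof -
  define m where "m = (\<Sum>i\<in>A. p i * h i)"
  have p_le_1: "p j \<le> 1" if "j \<in> A" for j
    using member_le_sum[of j A p] p_nonneg p_sum \<open>finite A\<close> that by simp
  have "(\<Sum>j\<in>A. (p j * (h j - m))\<^sup>2) \<le> (\<Sum>j\<in>A. p j * (h j - m)\<^sup>2)"
  proof (rule sum_mono)
    fix j assume "j \<in> A"
    then have "(p j)\<^sup>2 \<le> p j"
      using p_le_1 p_nonneg by (simp add: power2_eq_square mult_left_le)
    then show "(p j * (h j - m))\<^sup>2 \<le> p j * (h j - m)\<^sup>2"
      by (simp add: power_mult_distrib mult_right_mono)
  qed
  also have "(\<Sum>j\<in>A. p j * (h j - m)\<^sup>2) = (\<Sum>j\<in>A. p j * (h j)\<^sup>2) - m\<^sup>2"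
  proof -
    have "(\<Sum>j\<in>A. p j * (h j - m)\<^sup>2) = (\<Sum>j\<in>A. p j * (h j)\<^sup>2 - 2 * m * (p j * h j) + m\<^sup>2 * p j)"
      by (intro sum.cong) (simp_all add: power2_eq_square algebra_simps)
    also have "\<dots> = (\<Sum>j\<in>A. p j * (h j)\<^sup>2) - 2 * m * m + m\<^sup>2 * sum p A"
      by (simp add: sum.distrib sum_subtractf sum_distrib_left m_def)
    finally show ?thesis
      using p_sum by (simp add: power2_eq_square)
  qed
  also have "\<dots> \<le> (\<Sum>j\<in>A. (h j)\<^sup>2)"
  proof -
    have "(\<Sum>j\<in>A. p j * (h j)\<^sup>2) \<le> (\<Sum>j\<in>A. (h j)\<^sup>2)"
      using p_le_1 p_nonneg by (intro sum_mono) (simp add: mult_left_le_one_le)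
    then show ?thesis
      by (smt (verit) zero_le_power2)
  qed
  finally show ?thesis
    by (simp add: m_def)
qed

text \<open>Mean value theorem for \<open>t \<mapsto> \<langle>c, softmax (w + t (v - w))\<rangle>\<close> with \<open>c = softmax v - softmax w\<close>:
  the derivative is \<open>\<langle>c, p \<odot> (h - \<langle>p, h\<rangle>)\<rangle>\<close> with \<open>p\<close> a softmax vector and \<open>h = v - w\<close>.\<close>
lemma softmax_lipschitz: "norm (softmax v - softmax w) \<le> norm (v - w)"
proof -
  define c where "c = softmax v - softmax w"
  define h where "h j = v $ j - w $ j" for j
  define e where "e j t = exp (w $ j + t * h j)" for j t
  define Z where "Z t = (\<Sum>i\<in>UNIV. e i t)" for t
  define p where "p t j = e j t / Z t" for t j
  define g where "g t = (\<Sum>j\<in>UNIV. c $ j * p t j)" for t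
  define g' where "g' t = (\<Sum>j\<in>UNIV. c $ j * (p t j * (h j - (\<Sum>i\<in>UNIV. p t i * h i))))" for t
  have Z_pos: "Z t > 0" for t
    unfolding Z_def e_def by (intro sum_pos) auto
  have "DERIV g t :> g' t" for t
  proof -
    have "DERIV g t :> (\<Sum>j\<in>UNIV. c $ j * ((e j t * h j * Z t - e j t * (\<Sum>i\<in>UNIV. e i t * h i)) / (Z t * Z t)))"
      using Z_pos[of t] unfolding g_def p_def Z_def e_def
      by (auto intro!: derivative_eq_intros simp: algebra_simps)
    also have "(\<Sum>j\<in>UNIV. c $ j * ((e j t * h j * Z t - e j t * (\<Sum>i\<in>UNIV. e i t * h i)) / (Z t * Z t))) = g' t"
      unfolding g'_def p_def using Z_pos[of t]
      by (intro sum.cong refl) (simp add: field_simps sum_divide_distrib[symmetric] sum_distrib_left)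
    finally show ?thesis .
  qed
  then obtain z where "g 1 - g 0 = (1 - 0) * g' z"
    using MVT2[of 0 1 g g'] by auto
  moreover have "g 1 - g 0 = (norm c)\<^sup>2"
    unfolding g_def p_def Z_def e_def h_def c_def norm_real_vec_power2 sum_subtractf[symmetric]
    by (simp add: softmax_def power2_eq_square algebra_simps)
  ultimately have c_g': "(norm c)\<^sup>2 = g' z" by simp
  have "(g' z)\<^sup>2 \<le> (\<Sum>j\<in>UNIV. (c $ j)\<^sup>2) * (\<Sum>j\<in>UNIV. (p z j * (h j - (\<Sum>i\<in>UNIV. p z i * h i)))\<^sup>2)"
    unfolding g'_def by (rule Cauchy_Schwarz_ineq_sum)
  also have "\<dots> \<le> (\<Sum>j\<in>UNIV. (c $ j)\<^sup>2) * (\<Sum>j\<in>UNIV. (h j)\<^sup>2)"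
    using Z_pos[of z]
    by (intro mult_left_mono sum_power2_weighted_centered_le sum_nonneg)
       (auto simp: p_def e_def Z_def sum_divide_distrib[symmetric])
  also have "\<dots> = (norm c)\<^sup>2 * (norm (v - w))\<^sup>2"
    by (simp add: norm_real_vec_power2 h_def)
  finally have "(norm c)\<^sup>2 * (norm c)\<^sup>2 \<le> (norm c)\<^sup>2 * (norm (v - w))\<^sup>2"
    by (metis c_g' power2_eq_square)
  then have "norm c \<le> norm (v - w)"
    using mult_le_cancel_left_pos[of "(norm c)\<^sup>2" "(norm c)\<^sup>2" "(norm (v - w))\<^sup>2"]
    by (cases "c = 0") (auto intro: power2_le_imp_le)
  then show ?thesis
    by (simp add: c_def)
qed

lemma spec_norm_nonneg: "spec_norm (A :: real^'n^'m) \<ge> 0"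
  unfolding spec_norm_def
  by (rule onorm_pos_le) (use matrix_vector_mul_linear[of A] linear_conv_bounded_linear in blast)

lemma norm_vector_matrix_mult_le_spec_norm: "norm (x v* B) \<le> spec_norm (transpose B) * norm (x :: real^'n)"
proof -
  have "bounded_linear (\<lambda>y. transpose B *v y)"
    using matrix_vector_mul_linear[of "transpose B"] linear_conv_bounded_linear by blast
  from onorm[OF this, of x] show ?thesis
    unfolding spec_norm_def transpose_matrix_vector .
qed

text \<open>The norm of \<open>real^'d^'n\<close> is the Frobenius norm.\<close>
lemma norm_vector_matrix_mult_le: "norm (x v* S) \<le> norm S * norm (x :: real^'n)"
proof (rule power2_le_imp_le)
  have "(norm (x v* S))\<^sup>2 = (\<Sum>j\<in>UNIV. (\<Sum>i\<in>UNIV. S $ i $ j * x $ i)\<^sup>2)"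
    unfolding norm_real_vec_power2 vector_matrix_mult_def by (simp add: mult.commute)
  also have "\<dots> \<le> (\<Sum>j\<in>UNIV. (\<Sum>i\<in>UNIV. (S $ i $ j)\<^sup>2) * (\<Sum>i\<in>UNIV. (x $ i)\<^sup>2))"
    by (intro sum_mono Cauchy_Schwarz_ineq_sum)
  also have "\<dots> = (\<Sum>j\<in>UNIV. \<Sum>i\<in>UNIV. (S $ i $ j)\<^sup>2) * (norm x)\<^sup>2"
    by (simp only: norm_real_vec_power2 sum_distrib_right)
  also have "(\<Sum>j\<in>UNIV. \<Sum>i\<in>UNIV. (S $ i $ j)\<^sup>2) = (norm S)\<^sup>2"
    unfolding norm_vec_power2[of S] norm_real_vec_power2 by (rule sum.swap)
  also have "(norm S)\<^sup>2 * (norm x)\<^sup>2 = (norm S * norm x)\<^sup>2"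
    by (rule power_mult_distrib[symmetric])
  finally show "(norm (x v* S))\<^sup>2 \<le> (norm S * norm x)\<^sup>2" .
qed simp

lemma norm_Psi_diff_le:
  fixes \<Theta> :: "real^'c^'d" and A E :: "real^'n^'n" and X S :: "real^'d^'n"
  shows "norm (Psi \<Theta> u A (X + S) - Psi \<Theta> u E (X + S))
     \<le> spec_norm (transpose \<Theta>) * norm (A $ u - E $ u) * (spec_norm (transpose X) + norm S)"
proof -
  define D where "D = A $ u - E $ u"
  have "norm (Psi \<Theta> u A (X + S) - Psi \<Theta> u E (X + S))
      \<le> norm (((A $ u) v* (X + S)) v* \<Theta> - ((E $ u) v* (X + S)) v* \<Theta>)"
    unfolding Psi_def by (rule softmax_lipschitz)
  also have "\<dots> = norm ((D v* (X + S)) v* \<Theta>)"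
    by (simp add: D_def vector_matrix_mult_diff_distrib)
  also have "\<dots> \<le> spec_norm (transpose \<Theta>) * norm (D v* (X + S))"
    by (rule norm_vector_matrix_mult_le_spec_norm)
  also have "\<dots> \<le> spec_norm (transpose \<Theta>) * (spec_norm (transpose X) * norm D + norm S * norm D)"
  proof (rule mult_left_mono)
    have "norm (D v* (X + S)) \<le> norm (D v* X) + norm (D v* S)"
      by (simp add: vector_matrix_mult_add_rdistrib norm_triangle_ineq)
    also have "\<dots> \<le> spec_norm (transpose X) * norm D + norm S * norm D"
      by (intro add_mono norm_vector_matrix_mult_le_spec_norm norm_vector_matrix_mult_le)
    finally show "norm (D v* (X + S)) \<le> spec_norm (transpose X) * norm D + norm S * norm D" .
  qed (rule spec_norm_nonneg)
  finally show ?thesis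
    by (simp add: D_def algebra_simps)
qed

lemma continuous_on_norm_Psi_diff:
  fixes \<Theta> :: "real^'c^'d" and A E :: "real^'n^'n" and X :: "real^'d^'n"
  shows "continuous_on UNIV (\<lambda>Y. norm (Psi \<Theta> u A (X + Y) - Psi \<Theta> u E (X + Y)))"
proof -
  have "(\<Sum>i\<in>UNIV. exp (f i :: real)) \<noteq> 0" for f :: "'c \<Rightarrow> real"
    by (rule less_imp_neq[symmetric], rule sum_pos) auto
  then show ?thesis
    unfolding Psi_def softmax_def vector_matrix_mult_def
    by (intro continuous_intros) auto
qed

lemma borel_measurable_vec:
  assumes "\<And>i. (\<lambda>\<omega>. f \<omega> $ i) \<in> borel_measurable M"
  shows "(f :: _ \<Rightarrow> 'a::euclidean_space^'n) \<in> borel_measurable M"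
proof (subst borel_measurable_euclidean_space, intro ballI)
  fix b :: "'a^'n"
  assume "b \<in> Basis"
  then obtain i u where "b = axis i u" "u \<in> Basis"
    by (auto simp: Basis_vec_def)
  moreover have "(\<lambda>\<omega>. f \<omega> $ i \<bullet> u) \<in> borel_measurable M"
    using assms[of i] by measurable
  ultimately show "(\<lambda>\<omega>. f \<omega> \<bullet> b) \<in> borel_measurable M"
    by (simp add: inner_axis)
qed

lemma le_add_power2_divide:
  fixes s y :: real
  assumes "s > 0"
  shows "y \<le> s + y\<^sup>2 / s"
proof -
  have "2 * (s * y) \<le> s\<^sup>2 + y\<^sup>2"
    using zero_le_power2[of "s - y"] by (simp add: power2_diff)
  then have "s * y \<le> s\<^sup>2 + y\<^sup>2"
    by (smt (verit) zero_le_power2)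
  with assms show ?thesis
    by (simp add: field_simps power2_eq_square)
qed

lemma (in prob_space) chi_square_cdf_le_measure:
  assumes Q: "distributed M lborel Q (\<lambda>x. ennreal (chi_square_density m x))"
    and [measurable]: "S \<in> borel_measurable M"
    and S_le: "\<And>\<omega>. \<omega> \<in> space M \<Longrightarrow> S \<omega> \<le> a + c * (\<kappa> + Q \<omega>)"
    and "c \<ge> 0" "\<kappa> \<ge> 0"
  shows "chi_square_cdf m ((\<xi> - a) / c - \<kappa>) \<le> measure M {\<omega> \<in> space M. S \<omega> \<le> \<xi>}"
proof (cases "c = 0")
  case True
  \<comment> \<open>then the argument is \<open>-\<kappa>\<close>, since division by zero yields zero\<close>
  with \<open>\<kappa> \<ge> 0\<close> show ?thesis
    by (simp add: chi_square_cdf_nonpos)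
next
  case False
  with \<open>c \<ge> 0\<close> have "c > 0" by simp
  define t where "t = (\<xi> - a) / c - \<kappa>"
  have [measurable]: "Q \<in> borel_measurable M"
    using distributed_measurable[OF Q] by simp
  have "{\<omega> \<in> space M. Q \<omega> \<le> t} \<subseteq> {\<omega> \<in> space M. S \<omega> \<le> \<xi>}"
  proof safe
    fix \<omega>
    assume "\<omega> \<in> space M" "Q \<omega> \<le> t"
    then have "S \<omega> \<le> a + c * (\<kappa> + t)"
      using S_le[of \<omega>] \<open>c > 0\<close> by (smt (verit) mult_left_mono)
    also have "a + c * (\<kappa> + t) = \<xi>"
      using \<open>c > 0\<close> by (simp add: t_def)
    finally show "S \<omega> \<le> \<xi>" .
  qed
  then have "measure M {\<omega> \<in> space M. Q \<omega> \<le> t} \<le> measure M {\<omega> \<in> space M. S \<omega> \<le> \<xi>}"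
    by (intro finite_measure_mono) measurable
  then show ?thesis
    by (simp add: measure_le_eq_chi_square_cdf[OF Q] t_def)
qed

lemma average_norm_Psi_diff_le:
  fixes \<Theta> :: "real^'c^'d" and A E :: "real^'n^'n" and X :: "real^'d^'n" and u :: 'n
    and K :: "'k set" and Y :: "'k \<Rightarrow> real^'d^'n"
  assumes "\<sigma> > 0"
  defines "\<kappa> \<equiv> real (card K)"
    and "\<gamma>\<^sub>1 \<equiv> spec_norm (transpose \<Theta>) * spec_norm (transpose X)"
    and "\<gamma>\<^sub>2 \<equiv> spec_norm (transpose \<Theta>) / (real (card K) + 1)"
    and "G \<equiv> \<lambda>Z. norm (Psi \<Theta> u A (X + Z) - Psi \<Theta> u E (X + Z))"
    and "\<delta> \<equiv> norm (A $ u - E $ u)"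
  shows "1 / (\<kappa> + 1) * (G 0 + (\<Sum>k\<in>K. G (Y k)))
    \<le> \<gamma>\<^sub>1 * \<delta> + \<gamma>\<^sub>2 * \<delta> * \<sigma> * (\<kappa> + (\<Sum>k\<in>K. (norm (Y k))\<^sup>2 / \<sigma>\<^sup>2))"
proof -
  define T where "T = spec_norm (transpose \<Theta>)"
  define sX where "sX = spec_norm (transpose X)"
  define Q where "Q = (\<Sum>k\<in>K. (norm (Y k))\<^sup>2 / \<sigma>\<^sup>2)"
  have "T * \<delta> \<ge> 0" "\<kappa> \<ge> 0"
    by (simp_all add: T_def spec_norm_nonneg \<kappa>_def \<delta>_def)
  have G_le: "G Z \<le> T * \<delta> * (sX + norm Z)" for Z
    unfolding G_def T_def sX_def \<delta>_def by (rule norm_Psi_diff_le)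
  have G_Y: "G (Y k) \<le> T * \<delta> * (sX + \<sigma> + \<sigma> * ((norm (Y k))\<^sup>2 / \<sigma>\<^sup>2))" for k
  proof -
    have "norm (Y k) \<le> \<sigma> + \<sigma> * ((norm (Y k))\<^sup>2 / \<sigma>\<^sup>2)"
      using le_add_power2_divide[OF \<open>\<sigma> > 0\<close>, of "norm (Y k)"] \<open>\<sigma> > 0\<close>
      by (simp add: power2_eq_square)
    then have "T * \<delta> * (sX + norm (Y k)) \<le> T * \<delta> * (sX + \<sigma> + \<sigma> * ((norm (Y k))\<^sup>2 / \<sigma>\<^sup>2))"
      using \<open>T * \<delta> \<ge> 0\<close> by (intro mult_left_mono) simp_all
    with G_le[of "Y k"] show ?thesis
      by linarith
  qed
  have "G 0 + (\<Sum>k\<in>K. G (Y k)) \<le> T * \<delta> * sX + (\<Sum>k\<in>K. T * \<delta> * (sX + \<sigma> + \<sigma> * ((norm (Y k))\<^sup>2 / \<sigma>\<^sup>2)))"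
    using G_le[of 0] by (intro add_mono sum_mono G_Y) simp
  also have "\<dots> = T * \<delta> * sX + \<kappa> * (T * \<delta> * (sX + \<sigma>)) + T * \<delta> * \<sigma> * Q"
    by (simp add: Q_def \<kappa>_def sum.distrib sum_distrib_left algebra_simps)
  finally have "1 / (\<kappa> + 1) * (G 0 + (\<Sum>k\<in>K. G (Y k)))
      \<le> 1 / (\<kappa> + 1) * (T * \<delta> * sX + \<kappa> * (T * \<delta> * (sX + \<sigma>)) + T * \<delta> * \<sigma> * Q)"
    using \<open>\<kappa> \<ge> 0\<close> by (intro mult_left_mono) auto
  also have "\<dots> = \<gamma>\<^sub>1 * \<delta> + \<gamma>\<^sub>2 * \<delta> * \<sigma> * (\<kappa> + Q)"
  proof -
    have \<gamma>: "\<gamma>\<^sub>1 = T * sX" "\<gamma>\<^sub>2 = T / (\<kappa> + 1)"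
      by (simp_all add: \<gamma>\<^sub>1_def \<gamma>\<^sub>2_def T_def sX_def \<kappa>_def)
    show ?thesis
      unfolding \<gamma> using \<open>\<kappa> \<ge> 0\<close> by (simp add: field_simps)
  qed
  finally show ?thesis
    by (simp add: Q_def)
qed

theorem lemma2:
  fixes X :: "real^'d^'n" and \<Theta> :: "real^'c^'d" and A E :: "real^'n^'n"
    and L :: nat and u :: 'n and K :: "'k set"
    and M :: "'a measure" and \<Sigma> :: "'k \<Rightarrow> 'a \<Rightarrow> real^'d^'n"
    and \<sigma> \<xi> :: real
  assumes "L \<ge> 1"
    and "matpow A L $ u - E $ u \<noteq> 0"
    and "finite K" and "K \<noteq> {}"
    and "prob_space M"
    and "\<sigma> > 0"
    and "prob_space.indep_vars M (\<lambda>_. borel) (\<lambda>(k, i, j) \<omega>. \<Sigma> k \<omega> $ i $ j) (K \<times> UNIV \<times> UNIV)"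
    and "\<And>k i j. k \<in> K \<Longrightarrow>
           distributed M lborel (\<lambda>\<omega>. \<Sigma> k \<omega> $ i $ j) (\<lambda>x. ennreal (normal_density 0 \<sigma> x))"
  shows
    "let \<Delta> = matpow A L $ u - E $ u;
         \<gamma>\<^sub>1 = spec_norm (transpose \<Theta>) * spec_norm (transpose X);
         \<gamma>\<^sub>2 = spec_norm (transpose \<Theta>) / (real (card K) + 1);
         S = (\<lambda>\<omega>. (1 / (real (card K) + 1)) *
               (norm (Psi \<Theta> u (matpow A L) (X + 0) - Psi \<Theta> u E (X + 0))
                + (\<Sum>k\<in>K. norm (Psi \<Theta> u (matpow A L) (X + \<Sigma> k \<omega>) - Psi \<Theta> u E (X + \<Sigma> k \<omega>)))))
     in measure M {\<omega> \<in> space M. S \<omega> \<le> \<xi>}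
        \<ge> chi_square_cdf (card K * CARD('n) * CARD('d))
             ((\<xi> - \<gamma>\<^sub>1 * norm \<Delta>) / (\<gamma>\<^sub>2 * norm \<Delta> * \<sigma>) - real (card K))"
proof -
  interpret prob_space M by fact
  define I where "I = K \<times> (UNIV :: 'n set) \<times> (UNIV :: 'd set)"
  define Z where "Z = (\<lambda>(k, i, j) \<omega>. \<Sigma> k \<omega> $ i $ j)"
  define Q where "Q \<omega> = (\<Sum>p\<in>I. (Z p \<omega> / \<sigma>)\<^sup>2)" for \<omega>
  have "card I = card K * CARD('n) * CARD('d)"
    by (simp add: I_def card_cartesian_product)
  moreover have "distributed M lborel Q (\<lambda>x. ennreal (chi_square_density (card I) x))"
    unfolding Q_def using assms(3-8)
    by (intro sum_normal_squares_distributed) (auto simp: I_def Z_def)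
  ultimately have Q_chi_square:
    "distributed M lborel Q (\<lambda>x. ennreal (chi_square_density (card K * CARD('n) * CARD('d)) x))"
    by simp
  have Q_eq: "Q \<omega> = (\<Sum>k\<in>K. (norm (\<Sigma> k \<omega>))\<^sup>2 / \<sigma>\<^sup>2)" for \<omega>
    by (simp add: Q_def I_def Z_def sum.cartesian_product split_def norm_vec_power2
        norm_real_vec_power2 power_divide sum_divide_distrib)
  have "(\<lambda>\<omega>. \<Sigma> k \<omega>) \<in> borel_measurable M" if "k \<in> K" for k
    by (intro borel_measurable_vec) (rule distributed_measurable[OF assms(8)[OF that], simplified])
  then have S_measurable: "(\<lambda>\<omega>. 1 / (real (card K) + 1) *
      (norm (Psi \<Theta> u (matpow A L) (X + 0) - Psi \<Theta> u E (X + 0))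
       + (\<Sum>k\<in>K. norm (Psi \<Theta> u (matpow A L) (X + \<Sigma> k \<omega>) - Psi \<Theta> u E (X + \<Sigma> k \<omega>)))))
      \<in> borel_measurable M"
    using borel_measurable_continuous_onI[OF continuous_on_norm_Psi_diff] by measurable
  note S_le = average_norm_Psi_diff_le[OF assms(6), where A="matpow A L" and E=E and \<Theta>=\<Theta> and X=X
      and K=K and u=u]
  show ?thesis
    unfolding Let_def using S_le \<open>\<sigma> > 0\<close>
    by (intro chi_square_cdf_le_measure[OF Q_chi_square S_measurable])
       (simp_all add: Q_eq spec_norm_nonneg)
qed

end
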